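(* Fix $L>0$. There exists $C>0$ such that for all $u^0\in H^6(0,L)$ with $u^0,Pu^0,P^2u^0\in\mathrm{Dom}(P)$, all $\delta t\in(0,1)$ and $J\ge2$ with $\delta t/\delta x^2\le1/2$, and all $n\ge1$, $$\Big\|\sum_{k=0}^{n-1}(\mathrm{Id}+\delta t\,\mathsf P_\delta)^{n-1-k}\varepsilon_2^k\Big\|_{\ell^2}\le C\,\delta t\,\|P^2u^0\|_{H^1},$$ where $u$ is the solution of $\partial_tu=Pu$, $u(0)=u^0$, and $\varepsilon_2^k=\int_{k\delta t}^{(k+1)\delta t}((k+1)\delta t-s)\,\Pi_{\delta x}P^2u(s)\,ds$.
   Context: $P=\partial_x^2$ with homogeneous Neumann conditions on $(0,L)$, $\mathrm{Dom}(P)=\{u\in L^2:\partial_x^2u\in L^2,\ \partial_xu(0)=\partial_xu(L)=0\}$; the solution is $u(t)=\sum_{p\ge0}\alpha_pe^{-p^2\pi^2t/L^2}c_p$ with $c_0=1$, $c_p=\sqrt2\cos(p\pi x/L)$, $\alpha_p=\frac1L\int_0^Lu^0c_p$. For $J\ge2$: $\delta x=L/(J-1)$, $x_j=j\delta x$, $\|\mathsf v\|_{\ell^2}^2=\frac1J\sum_j\mathsf v_j^2$, $\Pi_{\delta x}w=(w(x_j))_{0\le j\le J-1}$, $\mathsf P_\delta=\frac1{\delta x^2}\times$ the tridiagonal $J\times J$ matrix with diagonal $(-1,-2,\dots,-2,-1)$ and off-diagonals $1$. $\|\cdot\|_{H^1}$ is the standard $H^1(0,L)$ norm. *)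

theory Defs
  imports "HOL-Analysis.Analysis"
begin

text \<open>Neumann eigenbasis on (0,L): c_0 = 1, c_p = sqrt 2 cos(p pi x / L).\<close>
definition cbasis :: "real \<Rightarrow> nat \<Rightarrow> real \<Rightarrow> real" where
  "cbasis L p x = (if p = 0 then 1 else sqrt 2 * cos (real p * pi * x / L))"

definition alpha_coef :: "real \<Rightarrow> (real \<Rightarrow> real) \<Rightarrow> nat \<Rightarrow> real" where
  "alpha_coef L u0 p = (1 / L) * (LBINT x=0..L. u0 x * cbasis L p x)"

definition heat_sol :: "real \<Rightarrow> (real \<Rightarrow> real) \<Rightarrow> real \<Rightarrow> real \<Rightarrow> real" where
  "heat_sol L u0 t x =
     (\<Sum>p. alpha_coef L u0 p * exp (- ((real p)^2 * pi^2 * t / L^2)) * cbasis L p x)"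

definition P2_sol :: "real \<Rightarrow> (real \<Rightarrow> real) \<Rightarrow> real \<Rightarrow> real \<Rightarrow> real" where
  "P2_sol L u0 s x = (deriv ^^ 4) (heat_sol L u0 s) x"

text \<open>u0 in H^6(0,L): d 0 = u0 on [0,L], d k classical derivatives of order k < 6 on [0,L]
  (one-sided at the end points), d 5 absolutely continuous with derivative d 6 in L^2(0,L).\<close>
definition H6_chain :: "real \<Rightarrow> (real \<Rightarrow> real) \<Rightarrow> (nat \<Rightarrow> real \<Rightarrow> real) \<Rightarrow> bool" where
  "H6_chain L u0 d \<longleftrightarrow>
     (\<forall>x\<in>{0..L}. d 0 x = u0 x) \<and>
     (\<forall>k<5. \<forall>x\<in>{0..L}. (d k has_real_derivative d (Suc k) x) (at x within {0..L})) \<and>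
     set_integrable lborel {0..L} (d 6) \<and>
     set_integrable lborel {0..L} (\<lambda>x. (d 6 x)^2) \<and>
     (\<forall>x\<in>{0..L}. d 5 x = d 5 0 + (LBINT t=0..x. d 6 t))"

text \<open>u0, P u0, P^2 u0 in Dom(P): homogeneous Neumann conditions.\<close>
definition dom_conditions :: "real \<Rightarrow> (nat \<Rightarrow> real \<Rightarrow> real) \<Rightarrow> bool" where
  "dom_conditions L d \<longleftrightarrow>
     d 1 0 = 0 \<and> d 1 L = 0 \<and> d 3 0 = 0 \<and> d 3 L = 0 \<and> d 5 0 = 0 \<and> d 5 L = 0"

definition H1_norm_P2 :: "real \<Rightarrow> (nat \<Rightarrow> real \<Rightarrow> real) \<Rightarrow> real" where
  "H1_norm_P2 L d = sqrt ((LBINT x=0..L. (d 4 x)^2) + (LBINT x=0..L. (d 5 x)^2))"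

definition dxJ :: "real \<Rightarrow> nat \<Rightarrow> real" where
  "dxJ L J = L / (real J - 1)"

text \<open>Discrete vectors of length J represented as nat \<Rightarrow> real (indices j < J).\<close>
definition l2norm :: "nat \<Rightarrow> (nat \<Rightarrow> real) \<Rightarrow> real" where
  "l2norm J v = sqrt ((1 / real J) * (\<Sum>j<J. (v j)^2))"

definition Pmat :: "nat \<Rightarrow> real \<Rightarrow> nat \<Rightarrow> nat \<Rightarrow> real" where
  "Pmat J dx i j =
     (if i = j then (if i = 0 \<or> i = J - 1 then -1 else -2)
      else if i = Suc j \<or> j = Suc i then 1 else 0) / dx^2"

definition mat_apply :: "nat \<Rightarrow> (nat \<Rightarrow> nat \<Rightarrow> real) \<Rightarrow> (nat \<Rightarrow> real) \<Rightarrow> nat \<Rightarrow> real" where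
  "mat_apply J A v i = (\<Sum>j<J. A i j * v j)"

definition euler_step :: "nat \<Rightarrow> real \<Rightarrow> real \<Rightarrow> (nat \<Rightarrow> real) \<Rightarrow> nat \<Rightarrow> real" where
  "euler_step J dx dt v i = v i + dt * mat_apply J (Pmat J dx) v i"

definition eps2 :: "real \<Rightarrow> (real \<Rightarrow> real) \<Rightarrow> nat \<Rightarrow> real \<Rightarrow> nat \<Rightarrow> nat \<Rightarrow> real" where
  "eps2 L u0 J dt k j =
     (LBINT s=real k * dt..real (Suc k) * dt.
        (real (Suc k) * dt - s) * P2_sol L u0 s (real j * dxJ L J))"

end

theory Submission
  imports Defs
begin

text \<open>
  Write \<open>w\<^sub>p = p pi / L\<close>. The fourth space derivative of the solution is the cosine series
  \<open>P\<^sup>2 u(s) = \<Sum>\<^sub>p beta\<^sub>p exp (- w\<^sub>p\<^sup>2 s) cos (w\<^sub>p x)\<close>, and two integrations by parts per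
  factor \<open>P\<close>, whose boundary terms vanish by the Neumann conditions, identify \<open>beta\<^sub>p\<close> with
  the cosine coefficients of \<open>P\<^sup>2 u\<^sup>0\<close>; hence \<open>\<bar>beta\<^sub>p\<bar> \<le> 2 / sqrt L * \<parallel>P\<^sup>2 u\<^sup>0\<parallel>\<^sub>L\<^sub>2\<close>.
  Every component of \<open>eps\<^sub>2\<^sup>k\<close> is therefore at most \<open>dt \<Sum>\<^sub>p \<bar>beta\<^sub>p\<bar> E\<^sub>k\<^sub>p\<close>, where \<open>E\<^sub>k\<^sub>p\<close>
  integrates \<open>exp (- w\<^sub>p\<^sup>2 s)\<close> over the \<open>k\<close>-th time step. Summed over \<open>k\<close> these integrals
  telescope to at most \<open>1 / w\<^sub>p\<^sup>2\<close>, and \<open>\<Sum>\<^sub>p 1 / w\<^sub>p\<^sup>2 = L\<^sup>2 / 6\<close> gives the constant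
  \<open>L sqrt L / 3\<close>. Finally, under the CFL condition every row of \<open>Id + dt P\<^sub>\<delta>\<close> is a
  probability vector, so its powers do not increase the maximum norm, which dominates the
  discrete \<open>l\<^sup>2\<close> norm.
\<close>

section \<open>Discrete maximum principle\<close>

lemma Pmat_row_sum:
  assumes "J \<ge> 2" and "i < J"
  shows "(\<Sum>j<J. Pmat J dx i j) = 0"
proof -
  define D where "D = (if i = 0 \<or> i = J - 1 then -1 else -2::real)"
  have "Pmat J dx i j = ((if j = i then D else 0) + (if 0 < i \<and> j = i - 1 then 1 else 0)
      + (if j = Suc i then 1 else 0)) / dx^2" for j
    unfolding Pmat_def D_def by auto
  then have "(\<Sum>j<J. Pmat J dx i j) = ((\<Sum>j<J. if j = i then D else 0)
      + (\<Sum>j<J. if 0 < i \<and> j = i - 1 then 1 else 0) + (\<Sum>j<J. if j = Suc i then 1 else 0)) / dx^2"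
    by (simp add: sum_divide_distrib[symmetric] sum.distrib)
  also have "\<dots> = (D + (if 0 < i then 1 else 0) + (if Suc i < J then 1 else 0)) / dx^2"
    using assms by (simp add: sum.delta' sum.If_cases)
  also have "\<dots> = 0"
    using assms unfolding D_def by auto
  finally show ?thesis .
qed

lemma euler_step_abs_le:
  assumes J: "J \<ge> 2" and dt: "0 \<le> dt" and cfl: "dt / dx^2 \<le> 1/2" and dx: "dx \<noteq> 0"
    and v: "\<And>j. j < J \<Longrightarrow> \<bar>v j\<bar> \<le> M" and i: "i < J"
  shows "\<bar>euler_step J dx dt v i\<bar> \<le> M"
proof -
  define c where "c j = (if j = i then 1 else 0) + dt * Pmat J dx i j" for j
  have c_nonneg: "c j \<ge> 0" for j
  proof -
    have "dt * 2 \<le> dx^2"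
      using cfl dx by (simp add: field_simps)
    then show ?thesis
      using dt dx unfolding c_def Pmat_def by (auto simp: field_simps)
  qed
  have c_sum: "(\<Sum>j<J. c j) = 1"
    unfolding c_def using i Pmat_row_sum[OF J i, of dx]
    by (simp add: sum.distrib sum_distrib_left[symmetric])
  have "euler_step J dx dt v i = (\<Sum>j<J. c j * v j)"
    using i by (simp add: c_def euler_step_def mat_apply_def distrib_right sum.distrib
        sum_distrib_left mult.assoc if_distrib[of "\<lambda>a. a * _"] sum.delta' cong: if_cong)
  also have "\<bar>\<dots>\<bar> \<le> (\<Sum>j<J. c j * M)"
    by (rule order_trans[OF sum_abs]) (auto intro!: sum_mono mult_left_mono v simp: abs_mult c_nonneg)
  also have "\<dots> = M"
    using c_sum by (simp add: sum_distrib_right[symmetric])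
  finally show ?thesis .
qed

lemma funpow_euler_step_abs_le:
  assumes "J \<ge> 2" "0 \<le> dt" "dt / dx^2 \<le> 1/2" "dx \<noteq> 0"
    and "\<And>j. j < J \<Longrightarrow> \<bar>v j\<bar> \<le> M" and "i < J"
  shows "\<bar>((euler_step J dx dt) ^^ m) v i\<bar> \<le> M"
  using assms(6)
proof (induction m arbitrary: i)
  case 0
  then show ?case using assms(5) by simp
next
  case (Suc m)
  then show ?case using euler_step_abs_le[OF assms(1-4)] by simp
qed

lemma l2norm_le:
  assumes "J > 0" and "\<And>j. j < J \<Longrightarrow> \<bar>v j\<bar> \<le> M"
  shows "l2norm J v \<le> M"
proof -
  have M: "M \<ge> 0"
    using assms by fastforce
  have "(\<Sum>j<J. (v j)^2) \<le> (\<Sum>j<J. M^2)"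
    using assms(2) M by (intro sum_mono) (metis abs_le_square_iff abs_of_nonneg lessThan_iff)
  then have "(1 / real J) * (\<Sum>j<J. (v j)^2) \<le> M^2"
    using assms(1) by (simp add: field_simps)
  then show ?thesis
    unfolding l2norm_def using M real_le_lsqrt by blast
qed

lemma exp_ge_power_div:
  fixes y :: real
  assumes "0 \<le> y" and "k > 0"
  shows "(y / real k) ^ k \<le> exp y"
proof -
  have "y / real k \<le> exp (y / real k)"
    using exp_ge_add_one_self[of "y / real k"] by linarith
  then have "(y / real k) ^ k \<le> exp (y / real k) ^ k"
    using assms by (intro power_mono) auto
  also have "\<dots> = exp y"
    using assms by (simp add: exp_of_nat_mult[symmetric])
  finally show ?thesis .
qed

lemma summable_power_mult_exp_neg_square:
  fixes s :: real
  assumes s: "s > 0"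
  shows "summable (\<lambda>p. real p ^ m * exp (- (s * real p ^ 2)))"
proof (rule summable_comparison_test')
  define k where "k = Suc m"
  define K where "K = (real k / s) ^ k"
  show "summable (\<lambda>p. K * inverse (real p ^ (m + 2)))"
    by (intro summable_mult inverse_power_summable) simp
  fix p :: nat
  assume "p \<ge> 1"
  then have p: "real p > 0" by simp
  have "(s * real p ^ 2 / real k) ^ k \<le> exp (s * real p ^ 2)"
    using s p by (intro exp_ge_power_div) (auto simp: k_def)
  moreover have "(s * real p ^ 2 / real k) ^ k = real p ^ (2 * k) / K"
    using s by (simp add: K_def power_divide power_mult_distrib power_mult)
  ultimately have "real p ^ (2 * k) / K \<le> exp (s * real p ^ 2)"
    by simp
  then have "inverse (exp (s * real p ^ 2)) \<le> inverse (real p ^ (2 * k) / K)"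
    using s p by (intro le_imp_inverse_le) (simp_all add: K_def k_def)
  then have "exp (- (s * real p ^ 2)) \<le> K / real p ^ (2 * k)"
    by (simp add: exp_minus)
  then have "real p ^ m * exp (- (s * real p ^ 2)) \<le> real p ^ m * (K / real p ^ (2 * k))"
    using p by (intro mult_left_mono) auto
  also have "\<dots> = K * inverse (real p ^ (m + 2))"
  proof -
    have "real p ^ (2 * k) = real p ^ m * real p ^ (m + 2)"
      unfolding power_add[symmetric] k_def by (simp add: mult_2)
    then show ?thesis
      using p by (simp add: field_simps)
  qed
  finally show "norm (real p ^ m * exp (- (s * real p ^ 2))) \<le> K * inverse (real p ^ (m + 2))"
    by simp
qed

lemma sums_inverse_squares: "(\<lambda>n. inverse (real n ^ 2)) sums (pi^2 / 6)"
  using inverse_squares_sums sums_Suc_iff[of "\<lambda>n. inverse (real n ^ 2)"]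
  by (simp add: inverse_eq_divide)

lemma integral_abs_le_sqrt_integral_square:
  fixes f :: "real \<Rightarrow> real"
  assumes ab: "a \<le> b" and f: "continuous_on {a..b} f"
  shows "integral {a..b} (\<lambda>x. \<bar>f x\<bar>) \<le> sqrt ((b - a) * integral {a..b} (\<lambda>x. (f x)^2))"
proof (cases "a = b")
  case True
  then show ?thesis by simp
next
  case False
  define A where "A = integral {a..b} (\<lambda>x. \<bar>f x\<bar>)"
  define Q where "Q = integral {a..b} (\<lambda>x. (f x)^2)"
  define t where "t = A / (b - a)"
  have ba: "b - a > 0" using ab False by simp
  have int_abs: "((\<lambda>x. \<bar>f x\<bar>) has_integral A) {a..b}"
    and int_sq: "((\<lambda>x. (f x)^2) has_integral Q) {a..b}"
    unfolding A_def Q_def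
    by (intro integrable_integral integrable_continuous_interval continuous_intros f)+
  have int_const: "((\<lambda>x. t^2) has_integral t^2 * (b - a)) {a..b}"
    using has_integral_const_real[of "t^2" a b] ab by (simp add: mult.commute)
  have "((\<lambda>x. (f x)^2 - 2 * t * \<bar>f x\<bar> + t^2) has_integral Q - 2 * t * A + t^2 * (b - a)) {a..b}"
    by (intro has_integral_add has_integral_diff has_integral_mult_right int_abs int_sq int_const)
  moreover have "0 \<le> (f x)^2 - 2 * t * \<bar>f x\<bar> + t^2" for x
  proof -
    have "(f x)^2 - 2 * t * \<bar>f x\<bar> + t^2 = (\<bar>f x\<bar> - t)^2"
      by (simp add: power2_eq_square algebra_simps)
    then show ?thesis by simp
  qed
  ultimately have "0 \<le> Q - 2 * t * A + t^2 * (b - a)"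
    by (rule has_integral_nonneg)
  also have "\<dots> = Q - A^2 / (b - a)"
    using ba by (simp add: t_def power2_eq_square)
  finally have "A^2 \<le> (b - a) * Q"
    using ba by (simp add: pos_divide_le_eq mult.commute)
  then show ?thesis
    unfolding A_def Q_def by (rule real_le_rsqrt)
qed

lemma interval_integral_eq_integral_continuous:
  fixes f :: "real \<Rightarrow> real"
  assumes "a \<le> b" and "continuous_on {a..b} f"
  shows "(LBINT x=a..b. f x) = integral {a..b} f"
  using assms by (intro interval_integral_eq_integral borel_integrable_atLeastAtMost')

lemma interval_integral_square_nonneg:
  fixes f :: "real \<Rightarrow> real"
  assumes "0 \<le> L"
  shows "(LBINT x=0..L. (f x)^2) \<ge> 0"
  using assms by (auto simp: interval_lebesgue_integral_def set_lebesgue_integral_def zero_ereal_def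
      intro!: integral_nonneg_AE)

lemma abs_interval_integral_suminf_le:
  fixes g :: "nat \<Rightarrow> real \<Rightarrow> real"
  assumes ab: "a \<le> b"
    and cont: "\<And>i. continuous_on {a..b} (g i)"
    and summable_abs: "\<And>s. s \<in> {a<..<b} \<Longrightarrow> summable (\<lambda>i. \<bar>g i s\<bar>)"
    and bound: "\<And>i. integral {a..b} (\<lambda>s. \<bar>g i s\<bar>) \<le> G i"
    and summable_G: "summable G"
  shows "\<bar>LBINT s=a..b. (\<Sum>i. g i s)\<bar> \<le> (\<Sum>i. G i)"
proof -
  define f where "f = (\<lambda>i s. indicator {a<..<b} s *\<^sub>R g i s)"
  have f_integrable: "integrable lborel (f i)" for i
  proof -
    have "set_integrable lborel {a<..<b} (g i)"
      by (rule set_integrable_subset[OF borel_integrable_atLeastAtMost'[OF cont]]) auto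
    then show ?thesis
      by (simp add: f_def set_integrable_def)
  qed
  have f_norm: "(\<integral>s. \<bar>f i s\<bar> \<partial>lborel) = integral {a..b} (\<lambda>s. \<bar>g i s\<bar>)" for i
  proof -
    have "(\<integral>s. \<bar>f i s\<bar> \<partial>lborel) = (LBINT s=a..b. \<bar>g i s\<bar>)"
      using ab by (simp add: f_def interval_lebesgue_integral_def set_lebesgue_integral_def
          abs_mult)
    also have "\<dots> = integral {a..b} (\<lambda>s. \<bar>g i s\<bar>)"
      by (intro interval_integral_eq_integral_continuous ab continuous_intros cont)
    finally show ?thesis .
  qed
  have summable_int: "summable (\<lambda>i. \<integral>s. \<bar>f i s\<bar> \<partial>lborel)"
  proof (rule summable_comparison_test[OF _ summable_G])
    have "0 \<le> integral {a..b} (\<lambda>s. \<bar>g i s\<bar>)" for i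
      by (intro integral_nonneg integrable_continuous_interval continuous_intros cont) auto
    then show "\<exists>N. \<forall>i\<ge>N. norm (\<integral>s. \<bar>f i s\<bar> \<partial>lborel) \<le> G i"
      using bound by (auto simp: f_norm)
  qed
  have "(LBINT s=a..b. (\<Sum>i. g i s)) = (\<integral>s. (\<Sum>i. f i s) \<partial>lborel)"
    using ab by (auto simp: f_def interval_lebesgue_integral_def set_lebesgue_integral_def
        indicator_def intro!: Bochner_Integration.integral_cong)
  also have "\<dots> = (\<Sum>i. \<integral>s. f i s \<partial>lborel)"
  proof (rule integral_suminf[OF f_integrable])
    show "AE s in lborel. summable (\<lambda>i. norm (f i s))"
      using summable_abs by (auto simp: f_def indicator_def)
    show "summable (\<lambda>i. \<integral>s. norm (f i s) \<partial>lborel)"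
      using summable_int by simp
  qed
  finally have "\<bar>LBINT s=a..b. (\<Sum>i. g i s)\<bar> = \<bar>\<Sum>i. \<integral>s. f i s \<partial>lborel\<bar>" by simp
  also have "\<dots> \<le> (\<Sum>i. G i)"
  proof (rule norm_suminf_le[where 'a=real, unfolded real_norm_def, OF _ summable_G])
    show "\<bar>\<integral>s. f i s \<partial>lborel\<bar> \<le> G i" for i
      using integral_norm_bound[of lborel "f i"] f_norm[of i] bound[of i] by simp
  qed
  finally show ?thesis .
qed

lemma integral_exp_neg_mult:
  fixes lam a b :: real
  assumes "lam > 0" and "a \<le> b"
  shows "integral {a..b} (\<lambda>s. exp (- (lam * s))) = (exp (- (lam * a)) - exp (- (lam * b))) / lam"
proof -
  have "((\<lambda>s. exp (- (lam * s))) has_integral (- exp (- (lam * b)) / lam - - exp (- (lam * a)) / lam)) {a..b}"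
  proof (rule fundamental_theorem_of_calculus[OF assms(2)])
    show "((\<lambda>s. - exp (- (lam * s)) / lam) has_vector_derivative exp (- (lam * x))) (at x within {a..b})"
      for x
      unfolding has_real_derivative_iff_has_vector_derivative[symmetric]
      using assms(1) by (auto intro!: derivative_eq_intros)
  qed
  then show ?thesis
    by (simp add: integral_unique diff_divide_distrib)
qed

section \<open>Cosine series of the solution\<close>

lemma deriv_cos_series:
  fixes b a :: "nat \<Rightarrow> real"
  assumes "summable (\<lambda>p. \<bar>b p\<bar>)" and "summable (\<lambda>p. \<bar>b p * a p\<bar>)"
  shows "deriv (\<lambda>x. \<Sum>p. b p * cos (a p * x)) = (\<lambda>x. \<Sum>p. - (b p * a p) * sin (a p * x))"
proof
  fix x :: real
  have "((\<lambda>x. \<Sum>p. b p * cos (a p * x)) has_field_derivative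
      (\<Sum>p. - (b p * a p) * sin (a p * x))) (at x)"
  proof (rule has_field_derivative_series'(2)[where S=UNIV
        and f="\<lambda>p x. b p * cos (a p * x)" and f'="\<lambda>p x. - (b p * a p) * sin (a p * x)"])
    have "uniform_limit UNIV (\<lambda>n x. \<Sum>p<n. - (b p * a p) * sin (a p * x))
        (\<lambda>x. \<Sum>p. - (b p * a p) * sin (a p * x)) sequentially"
      using assms(2) by (intro Weierstrass_m_test[where M="\<lambda>p. \<bar>b p * a p\<bar>"])
        (auto simp: abs_mult intro!: mult_left_le)
    then show "uniformly_convergent_on UNIV (\<lambda>n x. \<Sum>p<n. - (b p * a p) * sin (a p * x))"
      unfolding uniformly_convergent_on_def by blast
    show "summable (\<lambda>p. b p * cos (a p * 0))"
      using summable_rabs_cancel[OF assms(1)] by simp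
  qed (auto intro!: derivative_eq_intros)
  then show "deriv (\<lambda>x. \<Sum>p. b p * cos (a p * x)) x = (\<Sum>p. - (b p * a p) * sin (a p * x))"
    by (rule DERIV_imp_deriv)
qed

lemma deriv_sin_series:
  fixes b a :: "nat \<Rightarrow> real"
  assumes "summable (\<lambda>p. \<bar>b p * a p\<bar>)"
  shows "deriv (\<lambda>x. \<Sum>p. b p * sin (a p * x)) = (\<lambda>x. \<Sum>p. (b p * a p) * cos (a p * x))"
proof
  fix x :: real
  have "((\<lambda>x. \<Sum>p. b p * sin (a p * x)) has_field_derivative
      (\<Sum>p. (b p * a p) * cos (a p * x))) (at x)"
  proof (rule has_field_derivative_series'(2)[where S=UNIV
        and f="\<lambda>p x. b p * sin (a p * x)" and f'="\<lambda>p x. (b p * a p) * cos (a p * x)"])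
    have "uniform_limit UNIV (\<lambda>n x. \<Sum>p<n. (b p * a p) * cos (a p * x))
        (\<lambda>x. \<Sum>p. (b p * a p) * cos (a p * x)) sequentially"
      using assms by (intro Weierstrass_m_test[where M="\<lambda>p. \<bar>b p * a p\<bar>"])
        (auto simp: abs_mult intro!: mult_left_le)
    then show "uniformly_convergent_on UNIV (\<lambda>n x. \<Sum>p<n. (b p * a p) * cos (a p * x))"
      unfolding uniformly_convergent_on_def by blast
    show "summable (\<lambda>p. b p * sin (a p * 0))"
      by simp
  qed (auto intro!: derivative_eq_intros)
  then show "deriv (\<lambda>x. \<Sum>p. b p * sin (a p * x)) x = (\<Sum>p. (b p * a p) * cos (a p * x))"
    by (rule DERIV_imp_deriv)
qed

lemma deriv4_cos_series:
  fixes b a :: "nat \<Rightarrow> real"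
  assumes summable: "\<And>m. m \<le> 4 \<Longrightarrow> summable (\<lambda>p. \<bar>b p * a p ^ m\<bar>)"
  shows "(deriv ^^ 4) (\<lambda>x. \<Sum>p. b p * cos (a p * x)) = (\<lambda>x. \<Sum>p. (b p * a p ^ 4) * cos (a p * x))"
proof -
  define b1 where "b1 p = - (b p * a p)" for p
  define b2 where "b2 p = b1 p * a p" for p
  define b3 where "b3 p = - (b2 p * a p)" for p
  have "(\<lambda>p. \<bar>b1 p * a p\<bar>) = (\<lambda>p. \<bar>b p * a p ^ 2\<bar>)" "(\<lambda>p. \<bar>b2 p\<bar>) = (\<lambda>p. \<bar>b p * a p ^ 2\<bar>)"
    "(\<lambda>p. \<bar>b2 p * a p\<bar>) = (\<lambda>p. \<bar>b p * a p ^ 3\<bar>)" "(\<lambda>p. \<bar>b3 p * a p\<bar>) = (\<lambda>p. \<bar>b p * a p ^ 4\<bar>)"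
    by (simp_all add: b1_def b2_def b3_def abs_mult power_abs eval_nat_numeral mult.assoc)
  then have s: "summable (\<lambda>p. \<bar>b p\<bar>)" "summable (\<lambda>p. \<bar>b p * a p\<bar>)"
    "summable (\<lambda>p. \<bar>b1 p * a p\<bar>)" "summable (\<lambda>p. \<bar>b2 p\<bar>)" "summable (\<lambda>p. \<bar>b2 p * a p\<bar>)"
    "summable (\<lambda>p. \<bar>b3 p * a p\<bar>)"
    using summable[of 0] summable[of 1] summable[of 2] summable[of 3] summable[of 4] by simp_all
  have "(deriv ^^ 4) (\<lambda>x. \<Sum>p. b p * cos (a p * x))
      = deriv (deriv (deriv (deriv (\<lambda>x. \<Sum>p. b p * cos (a p * x)))))"
    by (simp add: eval_nat_numeral)
  also have "deriv (\<lambda>x. \<Sum>p. b p * cos (a p * x)) = (\<lambda>x. \<Sum>p. b1 p * sin (a p * x))"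
    unfolding b1_def by (rule deriv_cos_series[OF s(1,2)])
  also have "deriv (\<lambda>x. \<Sum>p. b1 p * sin (a p * x)) = (\<lambda>x. \<Sum>p. b2 p * cos (a p * x))"
    unfolding b2_def by (rule deriv_sin_series[OF s(3)])
  also have "deriv (\<lambda>x. \<Sum>p. b2 p * cos (a p * x)) = (\<lambda>x. \<Sum>p. b3 p * sin (a p * x))"
    unfolding b3_def by (rule deriv_cos_series[OF s(4,5)])
  also have "deriv (\<lambda>x. \<Sum>p. b3 p * sin (a p * x)) = (\<lambda>x. \<Sum>p. (b3 p * a p) * cos (a p * x))"
    by (rule deriv_sin_series[OF s(6)])
  also have "\<dots> = (\<lambda>x. \<Sum>p. (b p * a p ^ 4) * cos (a p * x))"
    by (simp add: b1_def b2_def b3_def eval_nat_numeral mult.assoc)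
  finally show ?thesis .
qed

definition wavenumber :: "real \<Rightarrow> nat \<Rightarrow> real" where
  "wavenumber L p = real p * pi / L"

lemma cbasis_eq_cos: "cbasis L p x = (if p = 0 then 1 else sqrt 2) * cos (wavenumber L p * x)"
  by (simp add: cbasis_def wavenumber_def)

lemma summable_wavenumber_power_mult_exp:
  assumes "L > 0" and "s > 0"
  shows "summable (\<lambda>p. wavenumber L p ^ m * exp (- (wavenumber L p ^ 2 * s)))"
proof -
  have "summable (\<lambda>p. (pi / L) ^ m * (real p ^ m * exp (- ((pi / L) ^ 2 * s * real p ^ 2))))"
    using assms by (intro summable_mult summable_power_mult_exp_neg_square) simp
  then show ?thesis
    by (simp add: wavenumber_def power_mult_distrib power_divide field_simps)
qed

lemma abs_integral_mult_cos_le: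
  fixes f :: "real \<Rightarrow> real"
  assumes "continuous_on {a..b} f"
  shows "\<bar>integral {a..b} (\<lambda>x. f x * cos (w * x))\<bar> \<le> integral {a..b} (\<lambda>x. \<bar>f x\<bar>)"
  using assms
  by (intro integral_norm_bound_integral[where 'a=real, unfolded real_norm_def]
      integrable_continuous_interval continuous_intros) (auto simp: abs_mult mult_left_le)

text \<open>The boundary terms of both integrations by parts vanish:
  the first because \<open>sin (wavenumber L p * L) = 0\<close>, the second because \<open>f' 0 = f' L = 0\<close>.\<close>

lemma integral_mult_cos_second_deriv:
  fixes f f' f'' :: "real \<Rightarrow> real"
  assumes L: "L > 0"
    and f: "\<And>x. x \<in> {0..L} \<Longrightarrow> (f has_real_derivative f' x) (at x within {0..L})"
    and f': "\<And>x. x \<in> {0..L} \<Longrightarrow> (f' has_real_derivative f'' x) (at x within {0..L})"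
    and f''_cont: "continuous_on {0..L} f''"
    and Neumann: "f' 0 = 0" "f' L = 0"
  shows "wavenumber L p ^ 2 * integral {0..L} (\<lambda>x. f x * cos (wavenumber L p * x))
         = - integral {0..L} (\<lambda>x. f'' x * cos (wavenumber L p * x))"
proof -
  define w where "w = wavenumber L p"
  have sin_wL: "sin (w * L) = 0"
    using L sin_npi[of p] by (simp add: w_def wavenumber_def)
  have f_cont: "continuous_on {0..L} f"
    unfolding continuous_on_eq_continuous_within using f DERIV_continuous by blast
  have f'_cont: "continuous_on {0..L} f'"
    unfolding continuous_on_eq_continuous_within using f' DERIV_continuous by blast
  have "((\<lambda>x. f' x * sin (w * x) + w * (f x * cos (w * x))) has_integral
      f L * sin (w * L) - f 0 * sin (w * 0)) {0..L}"
    using L f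
    by (intro fundamental_theorem_of_calculus)
      (auto simp: has_real_derivative_iff_has_vector_derivative[symmetric] algebra_simps
        intro!: derivative_eq_intros)
  then have "integral {0..L} (\<lambda>x. f' x * sin (w * x) + w * (f x * cos (w * x))) = 0"
    using sin_wL by (simp add: integral_unique)
  moreover have "(\<lambda>x. f' x * sin (w * x)) integrable_on {0..L}"
    and "(\<lambda>x. w * (f x * cos (w * x))) integrable_on {0..L}"
    by (intro integrable_continuous_interval continuous_intros f_cont f'_cont)+
  ultimately have first: "integral {0..L} (\<lambda>x. f' x * sin (w * x))
      + w * integral {0..L} (\<lambda>x. f x * cos (w * x)) = 0"
    by (simp add: integral_add)
  have "((\<lambda>x. f'' x * cos (w * x) - w * (f' x * sin (w * x))) has_integral
      f' L * cos (w * L) - f' 0 * cos (w * 0)) {0..L}"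
    using L f'
    by (intro fundamental_theorem_of_calculus)
      (auto simp: has_real_derivative_iff_has_vector_derivative[symmetric] algebra_simps
        intro!: derivative_eq_intros)
  then have "integral {0..L} (\<lambda>x. f'' x * cos (w * x) - w * (f' x * sin (w * x))) = 0"
    using Neumann by (simp add: integral_unique)
  moreover have "(\<lambda>x. f'' x * cos (w * x)) integrable_on {0..L}"
    and "(\<lambda>x. w * (f' x * sin (w * x))) integrable_on {0..L}"
    by (intro integrable_continuous_interval continuous_intros f'_cont f''_cont)+
  ultimately have second: "integral {0..L} (\<lambda>x. f'' x * cos (w * x))
      - w * integral {0..L} (\<lambda>x. f' x * sin (w * x)) = 0"
    by (simp add: integral_diff)
  from first have "w * integral {0..L} (\<lambda>x. f x * cos (w * x)) = - integral {0..L} (\<lambda>x. f' x * sin (w * x))"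
    by linarith
  then have "w^2 * integral {0..L} (\<lambda>x. f x * cos (w * x)) = - (w * integral {0..L} (\<lambda>x. f' x * sin (w * x)))"
    by (metis mult.assoc mult_minus_right power2_eq_square)
  with second show ?thesis
    unfolding w_def[symmetric] by linarith
qed

lemma H6_chain_has_derivative:
  assumes "H6_chain L u0 d" and "k < 5" and "x \<in> {0..L}"
  shows "(d k has_real_derivative d (Suc k) x) (at x within {0..L})"
  using assms unfolding H6_chain_def by blast

lemma H6_chain_continuous_on:
  assumes "H6_chain L u0 d" and "k < 5"
  shows "continuous_on {0..L} (d k)"
  unfolding continuous_on_eq_continuous_within
  using H6_chain_has_derivative[OF assms] DERIV_continuous by blast

lemma alpha_coef_eq_integral:
  assumes L: "L > 0" and H: "H6_chain L u0 d"
  shows "alpha_coef L u0 p =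
    (if p = 0 then 1 else sqrt 2) / L * integral {0..L} (\<lambda>x. d 0 x * cos (wavenumber L p * x))"
proof -
  define \<kappa> where "\<kappa> = (if p = 0 then 1 else sqrt 2 :: real)"
  have d0: "continuous_on {0..L} (d 0)"
    using H6_chain_continuous_on[OF H] by simp
  have "(LBINT x=0..L. u0 x * cbasis L p x) = (LBINT x=0..L. \<kappa> * (d 0 x * cos (wavenumber L p * x)))"
  proof (rule interval_integral_cong)
    fix x
    assume "x \<in> einterval (min 0 (ereal L)) (max 0 (ereal L))"
    then have "x \<in> {0..L}"
      using L by (auto simp: min_def max_def zero_ereal_def)
    then show "u0 x * cbasis L p x = \<kappa> * (d 0 x * cos (wavenumber L p * x))"
      using H by (simp add: H6_chain_def cbasis_eq_cos \<kappa>_def)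
  qed
  also have "\<dots> = \<kappa> * integral {0..L} (\<lambda>x. d 0 x * cos (wavenumber L p * x))"
    using L d0 interval_integral_eq_integral_continuous[of 0 L]
    by (simp add: zero_ereal_def continuous_intros)
  finally show ?thesis
    by (simp add: alpha_coef_def \<kappa>_def)
qed

lemma alpha_coef_abs_le:
  assumes L: "L > 0" and H: "H6_chain L u0 d"
  shows "\<bar>alpha_coef L u0 p\<bar> \<le> sqrt 2 / L * integral {0..L} (\<lambda>x. \<bar>d 0 x\<bar>)"
proof -
  define I where "I = integral {0..L} (\<lambda>x. d 0 x * cos (wavenumber L p * x))"
  have "\<bar>alpha_coef L u0 p\<bar> = (if p = 0 then 1 else sqrt 2) / L * \<bar>I\<bar>"
    using L by (simp add: alpha_coef_eq_integral[OF L H] I_def abs_mult)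
  also have "\<dots> \<le> sqrt 2 / L * integral {0..L} (\<lambda>x. \<bar>d 0 x\<bar>)"
  proof (intro mult_mono divide_right_mono)
    show "\<bar>I\<bar> \<le> integral {0..L} (\<lambda>x. \<bar>d 0 x\<bar>)"
      unfolding I_def using H6_chain_continuous_on[OF H] by (intro abs_integral_mult_cos_le) simp
  qed (use L in auto)
  finally show ?thesis .
qed

definition P2_coef :: "real \<Rightarrow> (real \<Rightarrow> real) \<Rightarrow> nat \<Rightarrow> real" where
  "P2_coef L u0 p = alpha_coef L u0 p * (if p = 0 then 1 else sqrt 2) * wavenumber L p ^ 4"

lemma P2_coef_eq_integral:
  assumes L: "L > 0" and H: "H6_chain L u0 d" and Neumann: "dom_conditions L d" and "p > 0"
  shows "P2_coef L u0 p = 2 / L * integral {0..L} (\<lambda>x. d 4 x * cos (wavenumber L p * x))"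
proof -
  define w where "w = wavenumber L p"
  define I where "I k = integral {0..L} (\<lambda>x. d k x * cos (w * x))" for k
  have "w^2 * I 0 = - I 2"
    unfolding I_def w_def
    by (rule integral_mult_cos_second_deriv[OF L, where f'="d 1"])
      (use Neumann H6_chain_has_derivative[OF H] H6_chain_continuous_on[OF H] in
        \<open>auto simp: dom_conditions_def numeral_eq_Suc\<close>)
  moreover have "w^2 * I 2 = - I 4"
    unfolding I_def w_def
    by (rule integral_mult_cos_second_deriv[OF L, where f'="d 3"])
      (use Neumann H6_chain_has_derivative[OF H] H6_chain_continuous_on[OF H] in
        \<open>auto simp: dom_conditions_def numeral_eq_Suc\<close>)
  ultimately have "w^4 * I 0 = I 4"
    by (metis minus_minus mult.assoc mult_minus_right power2_eq_square power4_eq_xxxx)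
  moreover have "P2_coef L u0 p = (sqrt 2 * sqrt 2) / L * (w^4 * I 0)"
    using \<open>p > 0\<close> unfolding P2_coef_def alpha_coef_eq_integral[OF L H] I_def w_def
    by (simp only: if_False neq0_conv[symmetric] mult_ac times_divide_eq_left times_divide_eq_right)
  ultimately show ?thesis
    by (simp add: I_def w_def)
qed

lemma H1_norm_P2_nonneg:
  assumes "L > 0"
  shows "H1_norm_P2 L d \<ge> 0"
  using assms interval_integral_square_nonneg[of L "d 4"] interval_integral_square_nonneg[of L "d 5"]
  by (simp add: H1_norm_P2_def)

lemma H1_norm_P2_ge:
  assumes L: "L > 0" and H: "H6_chain L u0 d"
  shows "sqrt (integral {0..L} (\<lambda>x. (d 4 x)^2)) \<le> H1_norm_P2 L d"
proof -
  have "(LBINT x=0..L. (d 4 x)^2) = integral {0..L} (\<lambda>x. (d 4 x)^2)"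
    using L H6_chain_continuous_on[OF H, of 4] interval_integral_eq_integral_continuous[of 0 L]
    by (simp add: zero_ereal_def continuous_intros)
  moreover have "(LBINT x=0..L. (d 5 x)^2) \<ge> 0"
    using L by (intro interval_integral_square_nonneg) simp
  ultimately show ?thesis
    unfolding H1_norm_P2_def by simp
qed

lemma P2_coef_abs_le:
  assumes L: "L > 0" and H: "H6_chain L u0 d" and Neumann: "dom_conditions L d"
  shows "\<bar>P2_coef L u0 p\<bar> \<le> 2 / sqrt L * H1_norm_P2 L d"
proof (cases "p = 0")
  case True
  then show ?thesis
    using H1_norm_P2_nonneg[OF L] L by (simp add: P2_coef_def wavenumber_def)
next
  case False
  have d4: "continuous_on {0..L} (d 4)"
    using H6_chain_continuous_on[OF H] by simp
  have "\<bar>integral {0..L} (\<lambda>x. d 4 x * cos (wavenumber L p * x))\<bar> \<le> integral {0..L} (\<lambda>x. \<bar>d 4 x\<bar>)"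
    using d4 by (rule abs_integral_mult_cos_le)
  also have "\<dots> \<le> sqrt L * sqrt (integral {0..L} (\<lambda>x. (d 4 x)^2))"
    using integral_abs_le_sqrt_integral_square[OF less_imp_le[OF L] d4] by (simp add: real_sqrt_mult)
  also have "\<dots> \<le> sqrt L * H1_norm_P2 L d"
    using L by (intro mult_left_mono H1_norm_P2_ge[OF L H]) simp
  finally have "\<bar>P2_coef L u0 p\<bar> \<le> 2 / L * (sqrt L * H1_norm_P2 L d)"
    using L False by (simp add: P2_coef_eq_integral[OF L H Neumann] abs_mult divide_right_mono)
  also have "\<dots> = 2 / sqrt L * H1_norm_P2 L d"
    using L by (simp add: field_simps real_sqrt_mult[symmetric])
  finally show ?thesis .
qed

lemma P2_sol_eq_cos_series:
  assumes L: "L > 0" and H: "H6_chain L u0 d" and s: "s > 0"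
  shows "P2_sol L u0 s x
    = (\<Sum>p. P2_coef L u0 p * exp (- (wavenumber L p ^ 2 * s)) * cos (wavenumber L p * x))"
proof -
  define A where "A = sqrt 2 / L * integral {0..L} (\<lambda>x. \<bar>d 0 x\<bar>)"
  define b where "b p = alpha_coef L u0 p * (if p = 0 then 1 else sqrt 2) * exp (- (wavenumber L p ^ 2 * s))"
    for p
  have heat_sol: "heat_sol L u0 s = (\<lambda>x. \<Sum>p. b p * cos (wavenumber L p * x))"
    by (auto simp: heat_sol_def b_def cbasis_eq_cos wavenumber_def power_divide
        power_mult_distrib mult_ac intro!: suminf_cong)
  have summable: "summable (\<lambda>p. \<bar>b p * wavenumber L p ^ m\<bar>)" for m
  proof (rule summable_comparison_test[OF _ summable_mult[OF summable_wavenumber_power_mult_exp[OF L s],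
        of "sqrt 2 * A"]])
    have "\<bar>b p\<bar> = \<bar>alpha_coef L u0 p\<bar> * (if p = 0 then 1 else sqrt 2) * exp (- (wavenumber L p ^ 2 * s))"
      for p by (simp add: b_def abs_mult)
    also have "\<dots> p \<le> A * sqrt 2 * exp (- (wavenumber L p ^ 2 * s))" for p
      using alpha_coef_abs_le[OF L H, of p]
      by (intro mult_right_mono mult_mono) (auto simp: A_def)
    finally have "\<bar>b p\<bar> \<le> sqrt 2 * A * exp (- (wavenumber L p ^ 2 * s))" for p
      by (simp add: mult_ac)
    moreover have "wavenumber L p \<ge> 0" for p
      using L by (simp add: wavenumber_def)
    ultimately have "\<bar>b p * wavenumber L p ^ m\<bar>
        \<le> sqrt 2 * A * exp (- (wavenumber L p ^ 2 * s)) * wavenumber L p ^ m" for p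
      by (simp add: abs_mult mult_right_mono)
    then show "\<exists>N. \<forall>p\<ge>N. norm \<bar>b p * wavenumber L p ^ m\<bar>
        \<le> sqrt 2 * A * (wavenumber L p ^ m * exp (- (wavenumber L p ^ 2 * s)))"
      by (simp add: mult_ac)
  qed
  have "P2_sol L u0 s x = (\<Sum>p. (b p * wavenumber L p ^ 4) * cos (wavenumber L p * x))"
    unfolding P2_sol_def heat_sol deriv4_cos_series[OF summable] ..
  then show ?thesis
    by (simp add: b_def P2_coef_def mult_ac)
qed

lemma summable_abs_P2_cos_series:
  assumes L: "L > 0" and H: "H6_chain L u0 d" and Neumann: "dom_conditions L d" and s: "s > 0"
  shows "summable (\<lambda>p. \<bar>P2_coef L u0 p * exp (- (wavenumber L p ^ 2 * s)) * cos (wavenumber L p * x)\<bar>)"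
proof (rule summable_comparison_test[OF _ summable_mult[OF summable_wavenumber_power_mult_exp[OF L s, of 0],
      of "2 / sqrt L * H1_norm_P2 L d"]])
  have "\<bar>P2_coef L u0 p\<bar> * exp (- (wavenumber L p ^ 2 * s)) * \<bar>cos (wavenumber L p * x)\<bar>
      \<le> 2 / sqrt L * H1_norm_P2 L d * exp (- (wavenumber L p ^ 2 * s)) * 1" for p
    using L H1_norm_P2_nonneg[OF L]
    by (intro mult_mono mult_right_mono P2_coef_abs_le[OF L H Neumann]) auto
  then show "\<exists>N. \<forall>p\<ge>N. norm \<bar>P2_coef L u0 p * exp (- (wavenumber L p ^ 2 * s)) * cos (wavenumber L p * x)\<bar>
      \<le> 2 / sqrt L * H1_norm_P2 L d * (wavenumber L p ^ 0 * exp (- (wavenumber L p ^ 2 * s)))"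
    by (simp add: abs_mult)
qed

section \<open>Local truncation errors\<close>

definition mode_decay :: "real \<Rightarrow> real \<Rightarrow> nat \<Rightarrow> nat \<Rightarrow> real" where
  "mode_decay L dt k p =
     integral {real k * dt..real (Suc k) * dt} (\<lambda>s. exp (- (wavenumber L p ^ 2 * s)))"

lemma mode_decay_nonneg: "dt \<ge> 0 \<Longrightarrow> mode_decay L dt k p \<ge> 0"
  unfolding mode_decay_def
  by (intro integral_nonneg integrable_continuous_interval continuous_intros) auto

lemma sum_mode_decay_le:
  assumes L: "L > 0" and dt: "dt \<ge> 0" and p: "p > 0"
  shows "(\<Sum>k<n. mode_decay L dt k p) \<le> (L / pi)^2 * inverse (real p ^ 2)"
proof -
  define lam where "lam = wavenumber L p ^ 2"
  have lam: "lam > 0"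
    using L p by (simp add: lam_def wavenumber_def)
  define F where "F k = exp (- (lam * (real k * dt)))" for k :: nat
  have "mode_decay L dt k p = (F k - F (Suc k)) / lam" for k
    using integral_exp_neg_mult[OF lam, of "real k * dt" "real (Suc k) * dt"] dt
    by (simp add: mode_decay_def F_def lam_def mult_right_mono)
  then have "(\<Sum>k<n. mode_decay L dt k p) = (F 0 - F n) / lam"
    by (simp add: sum_divide_distrib[symmetric] sum_lessThan_telescope')
  also have "\<dots> \<le> 1 / lam"
    using lam by (intro divide_right_mono) (auto simp: F_def)
  also have "\<dots> = (L / pi)^2 * inverse (real p ^ 2)"
    using L by (simp add: lam_def wavenumber_def field_simps)
  finally show ?thesis .
qed

lemma sum_eps2_mode_le:
  assumes L: "L > 0" and H: "H6_chain L u0 d" and Neumann: "dom_conditions L d" and dt: "dt \<ge> 0"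
  shows "(\<Sum>k<n. dt * \<bar>P2_coef L u0 p\<bar> * mode_decay L dt k p)
    \<le> dt * (2 / sqrt L * H1_norm_P2 L d) * ((L / pi)^2 * inverse (real p ^ 2))"
proof (cases "p = 0")
  case True
  then show ?thesis
    by (simp add: P2_coef_def wavenumber_def)
next
  case False
  have "(\<Sum>k<n. dt * \<bar>P2_coef L u0 p\<bar> * mode_decay L dt k p)
      = dt * \<bar>P2_coef L u0 p\<bar> * (\<Sum>k<n. mode_decay L dt k p)"
    by (simp add: sum_distrib_left)
  also have "\<dots> \<le> dt * (2 / sqrt L * H1_norm_P2 L d) * ((L / pi)^2 * inverse (real p ^ 2))"
  proof (intro mult_mono mult_left_mono)
    show "\<bar>P2_coef L u0 p\<bar> \<le> 2 / sqrt L * H1_norm_P2 L d"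
      by (rule P2_coef_abs_le[OF L H Neumann])
    show "(\<Sum>k<n. mode_decay L dt k p) \<le> (L / pi)^2 * inverse (real p ^ 2)"
      using False by (intro sum_mode_decay_le[OF L dt]) simp
    show "0 \<le> (\<Sum>k<n. mode_decay L dt k p)"
      by (intro sum_nonneg mode_decay_nonneg[OF dt])
  qed (use dt L H1_norm_P2_nonneg[OF L] in auto)
  finally show ?thesis .
qed

lemma summable_eps2_modes:
  assumes L: "L > 0" and H: "H6_chain L u0 d" and Neumann: "dom_conditions L d" and dt: "dt \<ge> 0"
  shows "summable (\<lambda>p. dt * \<bar>P2_coef L u0 p\<bar> * mode_decay L dt k p)"
proof (rule summable_comparison_test[OF _ summable_mult[OF sums_summable[OF sums_inverse_squares],
      of "dt * (2 / sqrt L * H1_norm_P2 L d) * (L / pi)^2"]])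
  show "\<exists>N. \<forall>p\<ge>N. norm (dt * \<bar>P2_coef L u0 p\<bar> * mode_decay L dt k p)
      \<le> dt * (2 / sqrt L * H1_norm_P2 L d) * (L / pi)^2 * inverse (real p ^ 2)"
  proof (intro exI allI impI)
    fix p :: nat
    have "norm (dt * \<bar>P2_coef L u0 p\<bar> * mode_decay L dt k p)
        \<le> (\<Sum>k'<Suc k. dt * \<bar>P2_coef L u0 p\<bar> * mode_decay L dt k' p)"
      using dt mode_decay_nonneg[OF dt] by (simp add: sum_nonneg)
    also have "\<dots> \<le> dt * (2 / sqrt L * H1_norm_P2 L d) * (L / pi)^2 * inverse (real p ^ 2)"
      using sum_eps2_mode_le[OF L H Neumann dt] by (simp only: mult.assoc)
    finally show "norm (dt * \<bar>P2_coef L u0 p\<bar> * mode_decay L dt k p)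
        \<le> dt * (2 / sqrt L * H1_norm_P2 L d) * (L / pi)^2 * inverse (real p ^ 2)" .
  qed
qed

definition eps2_majorant :: "real \<Rightarrow> (real \<Rightarrow> real) \<Rightarrow> real \<Rightarrow> nat \<Rightarrow> real" where
  "eps2_majorant L u0 dt k = (\<Sum>p. dt * \<bar>P2_coef L u0 p\<bar> * mode_decay L dt k p)"

lemma eps2_abs_le_majorant:
  assumes L: "L > 0" and H: "H6_chain L u0 d" and Neumann: "dom_conditions L d" and dt: "dt > 0"
  shows "\<bar>eps2 L u0 J dt k j\<bar> \<le> eps2_majorant L u0 dt k"
proof -
  define a where "a = real k * dt"
  define b where "b = real (Suc k) * dt"
  define x where "x = real j * dxJ L J"
  define g where "g p s = (b - s) * (P2_coef L u0 p * exp (- (wavenumber L p ^ 2 * s)) * cos (wavenumber L p * x))"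
    for p s
  have a: "a \<ge> 0" and ab: "a \<le> b" and ba: "b - a = dt"
    using dt by (auto simp: a_def b_def algebra_simps)
  have g_cont: "continuous_on {a..b} (g p)" for p
    unfolding g_def by (intro continuous_intros)
  have g_le: "\<bar>g p s\<bar> \<le> dt * \<bar>P2_coef L u0 p\<bar> * exp (- (wavenumber L p ^ 2 * s))"
    if "s \<in> {a..b}" for p s
  proof -
    have "\<bar>g p s\<bar> = (\<bar>b - s\<bar> * \<bar>cos (wavenumber L p * x)\<bar>)
        * (\<bar>P2_coef L u0 p\<bar> * exp (- (wavenumber L p ^ 2 * s)))"
      by (simp add: g_def abs_mult mult_ac)
    also have "\<dots> \<le> (dt * 1) * (\<bar>P2_coef L u0 p\<bar> * exp (- (wavenumber L p ^ 2 * s)))"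
      using that ba by (intro mult_right_mono mult_mono) auto
    finally show ?thesis
      by (simp add: mult_ac)
  qed
  have "eps2 L u0 J dt k j = (LBINT s=a..b. (\<Sum>p. g p s))"
    unfolding eps2_def a_def[symmetric] b_def[symmetric] x_def[symmetric]
  proof (rule interval_integral_cong)
    fix s
    assume "s \<in> einterval (min (ereal a) (ereal b)) (max (ereal a) (ereal b))"
    then have "s > 0"
      using a ab by (auto simp: min_def max_def)
    then show "(b - s) * P2_sol L u0 s x = (\<Sum>p. g p s)"
      using P2_sol_eq_cos_series[OF L H]
        suminf_mult[OF summable_rabs_cancel[OF summable_abs_P2_cos_series[OF L H Neumann]]]
      by (simp add: g_def)
  qed
  also have "\<bar>\<dots>\<bar> \<le> eps2_majorant L u0 dt k"
    unfolding eps2_majorant_def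
  proof (rule abs_interval_integral_suminf_le[OF ab])
    show "continuous_on {a..b} (g p)" for p
      by (rule g_cont)
    show "summable (\<lambda>p. \<bar>g p s\<bar>)" if "s \<in> {a<..<b}" for s
      using that a summable_mult[OF summable_abs_P2_cos_series[OF L H Neumann, where s=s and x=x], of "\<bar>b - s\<bar>"]
      by (simp add: g_def abs_mult)
    show "integral {a..b} (\<lambda>s. \<bar>g p s\<bar>) \<le> dt * \<bar>P2_coef L u0 p\<bar> * mode_decay L dt k p" for p
    proof -
      have "integral {a..b} (\<lambda>s. \<bar>g p s\<bar>)
          \<le> integral {a..b} (\<lambda>s. dt * \<bar>P2_coef L u0 p\<bar> * exp (- (wavenumber L p ^ 2 * s)))"
        using g_le by (intro integral_le integrable_continuous_interval continuous_intros g_cont) auto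
      also have "\<dots> = dt * \<bar>P2_coef L u0 p\<bar> * mode_decay L dt k p"
        by (simp add: mode_decay_def a_def b_def)
      finally show ?thesis .
    qed
    show "summable (\<lambda>p. dt * \<bar>P2_coef L u0 p\<bar> * mode_decay L dt k p)"
      using dt by (intro summable_eps2_modes[OF L H Neumann]) simp
  qed
  finally show ?thesis .
qed

lemma sum_eps2_majorant_le:
  assumes L: "L > 0" and H: "H6_chain L u0 d" and Neumann: "dom_conditions L d" and dt: "dt > 0"
  shows "(\<Sum>k<n. eps2_majorant L u0 dt k) \<le> L * sqrt L / 3 * dt * H1_norm_P2 L d"
proof -
  define c where "c = dt * (2 / sqrt L * H1_norm_P2 L d) * (L / pi)^2"
  have dt': "dt \<ge> 0" using dt by simp
  have "(\<Sum>k<n. eps2_majorant L u0 dt k) = (\<Sum>p. \<Sum>k<n. dt * \<bar>P2_coef L u0 p\<bar> * mode_decay L dt k p)"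
    unfolding eps2_majorant_def
    by (rule suminf_sum[symmetric]) (rule summable_eps2_modes[OF L H Neumann dt'])
  also have "\<dots> \<le> (\<Sum>p. c * inverse (real p ^ 2))"
    using sum_eps2_mode_le[OF L H Neumann dt'] summable_eps2_modes[OF L H Neumann dt']
      sums_summable[OF sums_inverse_squares]
    by (intro suminf_le summable_sum summable_mult) (auto simp: c_def mult.assoc)
  also have "\<dots> = c * (pi^2 / 6)"
    using sums_unique[OF sums_mult[OF sums_inverse_squares, of c]] by simp
  also have "\<dots> = L * sqrt L / 3 * dt * H1_norm_P2 L d"
    using L by (simp add: c_def field_simps power2_eq_square real_sqrt_mult[symmetric])
  finally show ?thesis .
qed

theorem proposition3p8:
  fixes L :: real
  assumes "L > 0"
  shows "\<exists>C>0. \<forall>u0 d dt J n.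
     H6_chain L u0 d \<and> dom_conditions L d \<and>
     0 < dt \<and> dt < 1 \<and> J \<ge> 2 \<and> dt / (dxJ L J)^2 \<le> 1/2 \<and> n \<ge> 1 \<longrightarrow>
     l2norm J (\<lambda>j. \<Sum>k<n. ((euler_step J (dxJ L J) dt) ^^ (n - 1 - k)) (eps2 L u0 J dt k) j)
       \<le> C * dt * H1_norm_P2 L d"
proof (intro exI[of _ "L * sqrt L / 3"] conjI allI impI)
  show "L * sqrt L / 3 > 0"
    using assms by simp
  fix u0 :: "real \<Rightarrow> real" and d :: "nat \<Rightarrow> real \<Rightarrow> real" and dt :: real and J n :: nat
  assume "H6_chain L u0 d \<and> dom_conditions L d \<and>
     0 < dt \<and> dt < 1 \<and> J \<ge> 2 \<and> dt / (dxJ L J)^2 \<le> 1/2 \<and> n \<ge> 1"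
  then have H: "H6_chain L u0 d" and Neumann: "dom_conditions L d" and dt: "dt > 0"
    and J: "J \<ge> 2" and cfl: "dt / (dxJ L J)^2 \<le> 1/2"
    by auto
  have dx: "dxJ L J \<noteq> 0"
    using assms J by (simp add: dxJ_def)
  have "\<bar>((euler_step J (dxJ L J) dt) ^^ (n - 1 - k)) (eps2 L u0 J dt k) j\<bar> \<le> eps2_majorant L u0 dt k"
    if "j < J" for k j
    using that dt
    by (intro funpow_euler_step_abs_le[OF J _ cfl dx] eps2_abs_le_majorant[OF assms H Neumann dt]) auto
  then have "l2norm J (\<lambda>j. \<Sum>k<n. ((euler_step J (dxJ L J) dt) ^^ (n - 1 - k)) (eps2 L u0 J dt k) j)
      \<le> (\<Sum>k<n. eps2_majorant L u0 dt k)"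
    using J by (intro l2norm_le order_trans[OF sum_abs] sum_mono) auto
  also have "\<dots> \<le> L * sqrt L / 3 * dt * H1_norm_P2 L d"
    by (rule sum_eps2_majorant_le[OF assms H Neumann dt])
  finally show "l2norm J (\<lambda>j. \<Sum>k<n. ((euler_step J (dxJ L J) dt) ^^ (n - 1 - k)) (eps2 L u0 J dt k) j)
      \<le> L * sqrt L / 3 * dt * H1_norm_P2 L d" .
qed

end
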